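(* Let $I\subseteq\mathbb{R}$ be an interval, let $f\in P(I)$, let $a,b\in I$ with $a<b$, and let $f\in L_{1}[a,b]$. Then for every $\alpha>0$, $$f\left(\frac{a+b}{2}\right)\leq \frac{\Gamma(\alpha+1)}{(b-a)^{\alpha}}\left[J_{a^{+}}^{\alpha}f(b)+J_{b^{-}}^{\alpha}f(a)\right]\leq 2\left(f(a)+f(b)\right).$$
   Context: The class $P(I)$ consists of all functions $f:I\to\mathbb{R}$ that are nonnegative and satisfy $f(\lambda x+(1-\lambda)y)\leq f(x)+f(y)$ for all $x,y\in I$ and $\lambda\in[0,1]$. For $f\in L_1[a,b]$ and $\alpha>0$, the Riemann–Liouville fractional integrals are $J_{a^{+}}^{\alpha}f(x)=\frac{1}{\Gamma(\alpha)}\int_a^x (x-t)^{\alpha-1}f(t)\,dt$ for $x>a$ and $J_{b^{-}}^{\alpha}f(x)=\frac{1}{\Gamma(\alpha)}\int_x^b (t-x)^{\alpha-1}f(t)\,dt$ for $x<b$, where $\Gamma(\alpha)=\int_0^\infty e^{-u}u^{\alpha-1}\,du$. *)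

theory Defs
  imports "HOL-Analysis.Analysis"
begin

definition P_class :: "real set \<Rightarrow> (real \<Rightarrow> real) \<Rightarrow> bool" where
  "P_class I f \<longleftrightarrow> (\<forall>x\<in>I. 0 \<le> f x) \<and>
     (\<forall>x\<in>I. \<forall>y\<in>I. \<forall>l\<in>{0..1::real}. f (l * x + (1 - l) * y) \<le> f x + f y)"

definition RL_left :: "real \<Rightarrow> real \<Rightarrow> (real \<Rightarrow> real) \<Rightarrow> real \<Rightarrow> real" where
  "RL_left \<alpha> a f x = (1 / Gamma \<alpha>) * (LINT t:{a..x}|lborel. (x - t) powr (\<alpha> - 1) * f t)"

definition RL_right :: "real \<Rightarrow> real \<Rightarrow> (real \<Rightarrow> real) \<Rightarrow> real \<Rightarrow> real" where
  "RL_right \<alpha> b f x = (1 / Gamma \<alpha>) * (LINT t:{x..b}|lborel. (t - x) powr (\<alpha> - 1) * f t)"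

end

theory Submission
  imports Defs
begin

text \<open>
  Substituting \<open>t \<mapsto> a + b - t\<close> turns the kernel \<open>(b - t) powr (\<alpha> - 1)\<close> of the left
  integral into the kernel \<open>(t - a) powr (\<alpha> - 1)\<close> of the right one, so the normalised sum
  of the two fractional integrals is \<open>\<integral>\<^sub>a\<^sup>b w(t) (f t + f (a + b - t)) dt / \<integral>\<^sub>a\<^sup>b w\<close>
  with \<open>w(t) = (t - a) powr (\<alpha> - 1)\<close>.
  Functions of class \<open>P\<close> satisfy \<open>f ((a + b) / 2) \<le> f t + f (a + b - t)\<close> and
  \<open>f t \<le> f a + f b\<close> on \<open>[a, b]\<close>, and integrating these bounds against the weight gives both
  inequalities.
\<close>

lemma P_class_nonneg:
  assumes "P_class I f" "x \<in> I"
  shows "0 \<le> f x"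
  using assms unfolding P_class_def by blast

lemma P_class_convex_comb_le:
  assumes "P_class I f" "x \<in> I" "y \<in> I" "0 \<le> l" "l \<le> 1"
  shows "f (l * x + (1 - l) * y) \<le> f x + f y"
  using assms unfolding P_class_def by simp

lemma P_class_midpoint_le:
  assumes "P_class I f" "x \<in> I" "y \<in> I"
  shows "f ((x + y) / 2) \<le> f x + f y"
proof -
  have "f ((x + y) / 2) = f ((1/2) * x + (1 - 1/2) * y)" by (simp add: add_divide_distrib)
  also have "\<dots> \<le> f x + f y" using assms by (intro P_class_convex_comb_le) auto
  finally show ?thesis .
qed

lemma P_class_le_endpoints:
  assumes "P_class I f" "a \<in> I" "b \<in> I" "t \<in> {a..b}"
  shows "f t \<le> f a + f b"
proof (cases "a = b")
  case True
  then show ?thesis using assms P_class_nonneg[of I f a] by auto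
next
  case False
  define l where "l = (b - t) / (b - a)"
  have "a < b" using False assms(4) by auto
  then have "l * (b - a) = b - t" "0 \<le> l" "l \<le> 1"
    using assms(4) by (auto simp: l_def)
  then have "t = l * a + (1 - l) * b" "0 \<le> l" "l \<le> 1" by (auto simp: algebra_simps)
  then show ?thesis using assms(1-3) P_class_convex_comb_le by metis
qed

lemma has_integral_reflect_Icc_real:
  fixes g :: "real \<Rightarrow> real"
  assumes "(g has_integral i) {a..b}"
  shows "((\<lambda>t. g (a + b - t)) has_integral i) {a..b}"
proof -
  have "((\<lambda>x. g (-x)) has_integral i) {-b..-a}" using assms by simp
  then have "(((\<lambda>x. g (-x)) \<circ> (+) (-(a + b))) has_integral i) {a..b}"
    by (subst has_integral_shift_Icc_real) simp
  then show ?thesis by (simp add: o_def add.commute)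
qed

lemma has_integral_powr_diff_left:
  fixes a b \<alpha> :: real
  assumes "a \<le> b" "\<alpha> > 0"
  shows "((\<lambda>t. (t - a) powr (\<alpha> - 1)) has_integral (b - a) powr \<alpha> / \<alpha>) {a..b}"
proof -
  have "((\<lambda>x. x powr (\<alpha> - 1)) has_integral (b - a) powr (\<alpha> - 1 + 1) / (\<alpha> - 1 + 1)) {0..b - a}"
    using assms by (intro has_integral_powr_from_0) auto
  then have "(((\<lambda>x. x powr (\<alpha> - 1)) \<circ> (+) (-a)) has_integral (b - a) powr \<alpha> / \<alpha>) {a..b}"
    by (subst has_integral_shift_Icc_real) simp
  then show ?thesis by (simp add: o_def)
qed

lemma set_integrable_lborel_if_nonneg_integrable_on:
  fixes w :: "'a::euclidean_space \<Rightarrow> real"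
  assumes "w integrable_on S" "\<And>x. x \<in> S \<Longrightarrow> 0 \<le> w x" "set_borel_measurable lborel S w"
  shows "set_integrable lborel S w"
proof -
  have "w absolutely_integrable_on S"
    using assms nonnegative_absolutely_integrable_1 by blast
  then show ?thesis using assms(3)
    unfolding set_integrable_def set_borel_measurable_def
    by (simp add: integrable_completion)
qed

text \<open>This makes the fractional integrals finite even when \<open>\<alpha> < 1\<close>, where the kernel is unbounded.\<close>
lemma set_integrable_weight_mult_bounded:
  fixes w f :: "real \<Rightarrow> real"
  assumes w_meas: "w \<in> borel_measurable borel" and w_int: "w integrable_on S"
    and w_nonneg: "\<And>t. t \<in> S \<Longrightarrow> 0 \<le> w t" and S: "S \<in> sets borel"
    and f_int: "set_integrable lborel S f" and f_bound: "\<And>t. t \<in> S \<Longrightarrow> \<bar>f t\<bar> \<le> M"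
  shows "set_integrable lborel S (\<lambda>t. w t * f t)"
proof (rule set_integrable_bound)
  have f_meas: "set_borel_measurable lborel S f"
    using f_int unfolding set_integrable_def set_borel_measurable_def by blast
  have "(\<lambda>x. w x * (indicat_real S x *\<^sub>R f x)) \<in> borel_measurable lborel"
    using f_meas w_meas unfolding set_borel_measurable_def by measurable
  then show "set_borel_measurable lborel S (\<lambda>t. w t * f t)"
    unfolding set_borel_measurable_def by (simp add: mult_ac)
  show "set_integrable lborel S (\<lambda>t. \<bar>M\<bar> * w t)"
  proof (rule set_integrable_lborel_if_nonneg_integrable_on)
    show "(\<lambda>t. \<bar>M\<bar> * w t) integrable_on S" using w_int by (rule integrable_on_mult_right)
    show "set_borel_measurable lborel S (\<lambda>t. \<bar>M\<bar> * w t)"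
      using w_meas S unfolding set_borel_measurable_def
      by (intro borel_measurable_scaleR borel_measurable_indicator) auto
  qed (use w_nonneg in auto)
  show "AE t in lborel. t \<in> S \<longrightarrow> norm (w t * f t) \<le> norm (\<bar>M\<bar> * w t)"
  proof (intro AE_I2 impI)
    fix t assume "t \<in> S"
    moreover have "\<bar>f t\<bar> \<le> \<bar>M\<bar>"
      using f_bound[OF \<open>t \<in> S\<close>] by (metis abs_ge_self order_trans)
    ultimately have "w t * \<bar>f t\<bar> \<le> w t * \<bar>M\<bar>"
      using w_nonneg by (intro mult_left_mono)
    with \<open>t \<in> S\<close> show "norm (w t * f t) \<le> norm (\<bar>M\<bar> * w t)"
      using w_nonneg by (simp add: abs_mult mult.commute)
  qed
qed

lemma P_class_weighted_hadamard:
  fixes w f :: "real \<Rightarrow> real"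
  assumes "is_interval I" "P_class I f" "a \<in> I" "b \<in> I"
    and w_int: "(w has_integral C) {a..b}" and w_nonneg: "\<And>t. t \<in> {a..b} \<Longrightarrow> 0 \<le> w t"
    and wf_int: "(\<lambda>t. w t * f t) integrable_on {a..b}"
    and wf_refl_int: "(\<lambda>t. w (a + b - t) * f t) integrable_on {a..b}"
  defines "J \<equiv> integral {a..b} (\<lambda>t. w (a + b - t) * f t) + integral {a..b} (\<lambda>t. w t * f t)"
  shows "f ((a + b) / 2) * C \<le> J" and "J \<le> 2 * (f a + f b) * C"
proof -
  have ab_I: "t \<in> I" if "t \<in> {a..b}" for t
    using that mem_is_interval_1_I[OF assms(1,3,4)] by simp
  have refl_ab: "a + b - t \<in> {a..b}" if "t \<in> {a..b}" for t using that by auto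
  have wf_refl: "((\<lambda>t. w t * f (a + b - t)) has_integral integral {a..b} (\<lambda>t. w (a + b - t) * f t)) {a..b}"
    using has_integral_reflect_Icc_real[OF integrable_integral[OF wf_refl_int]] by simp
  have J: "((\<lambda>t. w t * (f t + f (a + b - t))) has_integral J) {a..b}"
    using has_integral_add[OF integrable_integral[OF wf_int] wf_refl]
    unfolding J_def by (simp add: algebra_simps)
  show "f ((a + b) / 2) * C \<le> J"
  proof (rule has_integral_le[OF _ J])
    show "((\<lambda>t. w t * f ((a + b) / 2)) has_integral f ((a + b) / 2) * C) {a..b}"
      unfolding mult.commute[of _ C] by (rule has_integral_mult_left[OF w_int])
    fix t assume t: "t \<in> {a..b}"
    have "(t + (a + b - t)) / 2 = (a + b) / 2" by simp
    then have "f ((a + b) / 2) \<le> f t + f (a + b - t)"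
      using P_class_midpoint_le[OF assms(2) ab_I[OF t] ab_I[OF refl_ab[OF t]]] by simp
    then show "w t * f ((a + b) / 2) \<le> w t * (f t + f (a + b - t))"
      using w_nonneg[OF t] by (rule mult_left_mono)
  qed
  show "J \<le> 2 * (f a + f b) * C"
  proof (rule has_integral_le[OF J])
    show "((\<lambda>t. w t * (2 * (f a + f b))) has_integral 2 * (f a + f b) * C) {a..b}"
      unfolding mult.commute[of _ C] by (rule has_integral_mult_left[OF w_int])
    fix t assume t: "t \<in> {a..b}"
    have "f t + f (a + b - t) \<le> 2 * (f a + f b)"
      using P_class_le_endpoints[OF assms(2-4)] t refl_ab[OF t] by (smt (verit))
    then show "w t * (f t + f (a + b - t)) \<le> w t * (2 * (f a + f b))"
      using w_nonneg[OF t] by (rule mult_left_mono)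
  qed
qed

theorem theorem7:
  fixes I :: "real set" and f :: "real \<Rightarrow> real" and a b \<alpha> :: real
  assumes "is_interval I"
    and "P_class I f"
    and "a \<in> I" and "b \<in> I" and "a < b"
    and "set_integrable lborel {a..b} f"
    and "\<alpha> > 0"
  shows "f ((a + b) / 2) \<le> Gamma (\<alpha> + 1) / (b - a) powr \<alpha> * (RL_left \<alpha> a f b + RL_right \<alpha> b f a)
    \<and> Gamma (\<alpha> + 1) / (b - a) powr \<alpha> * (RL_left \<alpha> a f b + RL_right \<alpha> b f a) \<le> 2 * (f a + f b)"
proof -
  define w where "w t = (t - a) powr (\<alpha> - 1)" for t
  define C where "C = (b - a) powr \<alpha> / \<alpha>"
  have w_int: "(w has_integral C) {a..b}"
    unfolding w_def C_def using assms(5,7) by (intro has_integral_powr_diff_left) auto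
  have f_bound: "\<bar>f t\<bar> \<le> f a + f b" if "t \<in> {a..b}" for t
    using that P_class_le_endpoints[OF assms(2-4)] P_class_nonneg[OF assms(2)]
      mem_is_interval_1_I[OF assms(1,3,4)] by fastforce
  have "(\<lambda>t. w (a + b - t)) integrable_on {a..b}" "w integrable_on {a..b}"
    using has_integral_reflect_Icc_real[OF w_int] w_int by blast+
  moreover have "w \<in> borel_measurable borel" "(\<lambda>t. w (a + b - t)) \<in> borel_measurable borel"
    unfolding w_def by measurable
  moreover have "0 \<le> w t" for t unfolding w_def by simp
  ultimately have wf: "set_integrable lborel {a..b} (\<lambda>t. w t * f t)"
    "set_integrable lborel {a..b} (\<lambda>t. w (a + b - t) * f t)"
    using assms(6) f_bound
    by (auto intro!: set_integrable_weight_mult_bounded[where M = "f a + f b"])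
  have "RL_left \<alpha> a f b = integral {a..b} (\<lambda>t. w (a + b - t) * f t) / Gamma \<alpha>"
    using set_borel_integral_eq_integral(2)[OF wf(2)] by (simp add: RL_left_def w_def)
  moreover have "RL_right \<alpha> b f a = integral {a..b} (\<lambda>t. w t * f t) / Gamma \<alpha>"
    using set_borel_integral_eq_integral(2)[OF wf(1)] by (simp add: RL_right_def w_def)
  moreover have "Gamma (\<alpha> + 1) = \<alpha> * Gamma \<alpha>"
    using assms(7) by (intro Gamma_plus1) (auto elim!: nonpos_Ints_cases)
  moreover have "Gamma \<alpha> > 0" "(b - a) powr \<alpha> > 0" using assms(5,7) by (auto intro: Gamma_real_pos)
  ultimately have normalised_sum: "Gamma (\<alpha> + 1) / (b - a) powr \<alpha> * (RL_left \<alpha> a f b + RL_right \<alpha> b f a)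
      = (integral {a..b} (\<lambda>t. w (a + b - t) * f t) + integral {a..b} (\<lambda>t. w t * f t)) / C"
    unfolding C_def by (simp add: field_simps)
  have "C > 0" unfolding C_def using assms(5,7) by simp
  with P_class_weighted_hadamard[OF assms(1-4) w_int _ wf[THEN set_borel_integral_eq_integral(1)]]
  show ?thesis
    unfolding normalised_sum by (simp add: w_def pos_le_divide_eq pos_divide_le_eq)
qed

end
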